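(* Let $\mu\in\mathbb{R}$ and $\sigma>0$, and let $\mathcal{L}(\mu,\sigma)$ be the set of probability distributions $F$ on $\mathbb{R}$ with $\mathbb{E}^F[X]=\mu$ and $\mathbb{E}^F[X^2]=\mu^2+\sigma^2$. For any $F\in\mathcal{L}(\mu,\sigma)$ there exists a two-point distribution $F^*\in\mathcal{L}(\mu,\sigma)$ whose support is contained in $[\mathrm{ess\mbox{-}inf}\,F,\ \mathrm{ess\mbox{-}sup}\,F]$. Moreover, if $F$ is symmetric, then such a two-point distribution $F^*$ can be chosen to be symmetric.
   Context: A two-point distribution is the law of a random variable $X$ with $\mathbb{P}(X=x_1)=p_1$, $\mathbb{P}(X=x_2)=p_2$, where $0\le p_i<1$ and $p_1+p_2=1$. $\mathrm{ess\mbox{-}inf}\,F$ and $\mathrm{ess\mbox{-}sup}\,F$ are the essential infimum and supremum of a random variable with distribution $F$ (possibly $\mp\infty$). A distribution of $X$ is symmetric if there is $a\in\mathbb{R}$ with $\mathbb{P}(X-a>x)=\mathbb{P}(X-a<-x)$ for all $x\in\mathbb{R}$. *)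

theory Defs
  imports "HOL-Probability.Probability"
begin

definition real_dist :: "real measure \<Rightarrow> bool" where
  "real_dist M \<longleftrightarrow> prob_space M \<and> sets M = sets borel"

definition L_class :: "real \<Rightarrow> real \<Rightarrow> real measure \<Rightarrow> bool" where
  "L_class \<mu> \<sigma> M \<longleftrightarrow> real_dist M \<and>
     integrable M (\<lambda>x. x) \<and> integrable M (\<lambda>x. x ^ 2) \<and>
     (\<integral>x. x \<partial>M) = \<mu> \<and> (\<integral>x. x ^ 2 \<partial>M) = \<mu> ^ 2 + \<sigma> ^ 2"

definition ess_sup_dist :: "real measure \<Rightarrow> ereal" where
  "ess_sup_dist M = esssup M (\<lambda>x. ereal x)"

definition ess_inf_dist :: "real measure \<Rightarrow> ereal" where
  "ess_inf_dist M = - esssup M (\<lambda>x. - ereal x)"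

definition two_point_on :: "real measure \<Rightarrow> real \<Rightarrow> real \<Rightarrow> bool" where
  "two_point_on M x1 x2 \<longleftrightarrow> real_dist M \<and> x1 \<noteq> x2 \<and>
     (\<exists>p1 p2. 0 \<le> p1 \<and> p1 < 1 \<and> 0 \<le> p2 \<and> p2 < 1 \<and> p1 + p2 = 1 \<and>
        measure M {x1} = p1 \<and> measure M {x2} = p2)"

definition symmetric_dist :: "real measure \<Rightarrow> bool" where
  "symmetric_dist M \<longleftrightarrow> (\<exists>a. \<forall>x. measure M {y. y - a > x} = measure M {y. y - a < - x})"

end

theory Submission
  imports Defs
begin

(*
  If F has mean \<mu> and lives on [a, b], integrating (b - x)(x - a) \<ge> 0 gives the Bhatia-Davis
  inequality \<sigma>\<^sup>2 \<le> (b - \<mu>)(\<mu> - a), and \<sigma> > 0 forces a < \<mu> < b.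
  A two-point law on x1 < \<mu> < x2 with the right weight has mean \<mu>, and its variance is
  (x2 - \<mu>)(\<mu> - x1). If [a, b] contains [\<mu> - \<sigma>, \<mu> + \<sigma>], take x1, x2 = \<mu> \<plusminus> \<sigma> with equal
  weights. Otherwise an endpoint, say a, lies within \<sigma> of \<mu>; take x1 = a and
  x2 = \<mu> + \<sigma>\<^sup>2 / (\<mu> - a), which is at most b by Bhatia-Davis. A law symmetric about c has
  mean c = \<mu> and a = 2\<mu> - b, so Bhatia-Davis reads \<sigma> \<le> b - \<mu> and the symmetric case applies.
*)

lemma real_dist_iff_real_distribution: "real_dist M \<longleftrightarrow> real_distribution M"
  unfolding real_dist_def real_distribution_def real_distribution_axioms_def by auto

lemma (in real_distribution) prob_UNIV [simp]: "prob UNIV = 1"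
  using prob_space by simp

lemma L_classD:
  assumes "L_class \<mu> \<sigma> F"
  shows "real_distribution F" "integrable F (\<lambda>x. x)" "integrable F (\<lambda>x. x ^ 2)"
    "(\<integral>x. x \<partial>F) = \<mu>" "(\<integral>x. x ^ 2 \<partial>F) = \<mu> ^ 2 + \<sigma> ^ 2"
  using assms by (auto simp: L_class_def real_dist_iff_real_distribution)

definition two_point_dist :: "real \<Rightarrow> real \<Rightarrow> real \<Rightarrow> real measure" where
  "two_point_dist q x1 x2 = distr (measure_pmf (bernoulli_pmf q)) borel (\<lambda>b. if b then x2 else x1)"

lemma real_distribution_two_point_dist: "real_distribution (two_point_dist q x1 x2)"
  unfolding two_point_dist_def real_distribution_def real_distribution_axioms_def
  by (auto intro!: measure_pmf.prob_space_distr)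

lemma measure_two_point_dist:
  assumes "0 \<le> q" "q \<le> 1" "S \<in> sets borel"
  shows "measure (two_point_dist q x1 x2) S = (if x2 \<in> S then q else 0) + (if x1 \<in> S then 1 - q else 0)"
proof -
  let ?A = "(\<lambda>b. if b then x2 else x1) -` S"
  have "measure (two_point_dist q x1 x2) S = measure (measure_pmf (bernoulli_pmf q)) ?A"
    unfolding two_point_dist_def using assms(3) by (subst measure_distr) auto
  also have "\<dots> = sum (pmf (bernoulli_pmf q)) ?A"
    by (simp add: measure_measure_pmf_finite)
  also have "?A = (if x2 \<in> S then {True} else {}) \<union> (if x1 \<in> S then {False} else {})"
    by (auto split: if_splits)
  finally show ?thesis
    using assms by (cases "x1 \<in> S"; cases "x2 \<in> S") simp_all
qed

lemma integral_two_point_dist: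
  fixes f :: "real \<Rightarrow> real"
  assumes "0 \<le> q" "q \<le> 1" "f \<in> borel_measurable borel"
  shows "(\<integral>x. f x \<partial>two_point_dist q x1 x2) = q * f x2 + (1 - q) * f x1"
  unfolding two_point_dist_def using assms by (subst integral_distr) auto

lemma integrable_two_point_dist:
  fixes f :: "real \<Rightarrow> real"
  assumes "f \<in> borel_measurable borel"
  shows "integrable (two_point_dist q x1 x2) f"
  unfolding two_point_dist_def using assms
  by (subst integrable_distr_eq) (auto intro!: integrable_measure_pmf_finite)

lemma two_point_on_two_point_dist:
  assumes "x1 \<noteq> x2" "0 < q" "q < 1"
  shows "two_point_on (two_point_dist q x1 x2) x1 x2"
  unfolding two_point_on_def using assms
  by (intro conjI exI[of _ "1 - q"] exI[of _ q])
     (auto simp: real_dist_iff_real_distribution real_distribution_two_point_dist measure_two_point_dist)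

lemma L_class_two_point_dist:
  assumes "x1 < \<mu>" "\<mu> < x2" "(x2 - \<mu>) * (\<mu> - x1) = \<sigma> ^ 2"
  shows "L_class \<mu> \<sigma> (two_point_dist ((\<mu> - x1) / (x2 - x1)) x1 x2)"
proof -
  define q where "q = (\<mu> - x1) / (x2 - x1)"
  have q: "0 \<le> q" "q \<le> 1" "q * (x2 - x1) = \<mu> - x1"
    using assms by (auto simp: q_def field_simps)
  have "q * x2 + (1 - q) * x1 = x1 + q * (x2 - x1)"
    by (simp add: algebra_simps)
  then have mean: "(\<integral>x. x \<partial>two_point_dist q x1 x2) = \<mu>"
    using q by (simp add: integral_two_point_dist)
  have "q * x2 ^ 2 + (1 - q) * x1 ^ 2 = x1 ^ 2 + q * (x2 - x1) * (x2 + x1)"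
    by (simp add: algebra_simps power2_eq_square)
  also have "\<dots> = \<mu> ^ 2 + (x2 - \<mu>) * (\<mu> - x1)"
    unfolding q by (simp add: algebra_simps power2_eq_square)
  finally have second: "(\<integral>x. x ^ 2 \<partial>two_point_dist q x1 x2) = \<mu> ^ 2 + \<sigma> ^ 2"
    using q assms(3) by (simp add: integral_two_point_dist)
  show ?thesis
    unfolding L_class_def q_def[symmetric]
    using mean second
    by (simp add: real_dist_iff_real_distribution real_distribution_two_point_dist integrable_two_point_dist)
qed

lemma symmetric_two_point_dist: "symmetric_dist (two_point_dist (1 / 2) x1 x2)"
  unfolding symmetric_dist_def
proof (intro exI[of _ "(x1 + x2) / 2"] allI)
  fix x
  show "measure (two_point_dist (1 / 2) x1 x2) {y. y - (x1 + x2) / 2 > x} =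
        measure (two_point_dist (1 / 2) x1 x2) {y. y - (x1 + x2) / 2 < - x}"
    by (subst (1 2) measure_two_point_dist) (auto simp: field_simps)
qed

lemma two_point_L_class_exists:
  assumes "x1 < \<mu>" "\<mu> < x2" "(x2 - \<mu>) * (\<mu> - x1) = \<sigma> ^ 2"
  shows "\<exists>G. two_point_on G x1 x2 \<and> L_class \<mu> \<sigma> G \<and> (x2 - \<mu> = \<mu> - x1 \<longrightarrow> symmetric_dist G)"
proof (intro exI conjI impI)
  let ?q = "(\<mu> - x1) / (x2 - x1)"
  show "two_point_on (two_point_dist ?q x1 x2) x1 x2"
    using assms by (intro two_point_on_two_point_dist) (auto simp: field_simps)
  show "L_class \<mu> \<sigma> (two_point_dist ?q x1 x2)"
    using assms by (rule L_class_two_point_dist)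
  assume "x2 - \<mu> = \<mu> - x1"
  then have half: "?q = 1 / 2"
    using assms by (simp add: field_simps)
  show "symmetric_dist (two_point_dist ?q x1 x2)"
    unfolding half by (rule symmetric_two_point_dist)
qed

lemma L_class_Bhatia_Davis:
  assumes "L_class \<mu> \<sigma> F" and "AE x in F. l \<le> x \<and> x \<le> u"
  shows "\<sigma> ^ 2 \<le> (u - \<mu>) * (\<mu> - l)"
proof -
  note F = L_classD[OF assms(1)]
  interpret real_distribution F by (rule F(1))
  have "AE x in F. 0 \<le> (u - x) * (x - l)"
    using assms(2) by eventually_elim simp
  then have "0 \<le> (\<integral>x. (u - x) * (x - l) \<partial>F)"
    by (rule integral_nonneg_AE)
  also have "(\<integral>x. (u - x) * (x - l) \<partial>F) = (\<integral>x. (u + l) * x - u * l - x ^ 2 \<partial>F)"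
    by (simp add: algebra_simps power2_eq_square)
  also have "\<dots> = (u + l) * \<mu> - u * l - (\<mu> ^ 2 + \<sigma> ^ 2)"
    using F by simp
  finally show ?thesis
    by (simp add: algebra_simps power2_eq_square)
qed

lemma (in prob_space) AE_eq_if_AE_ge_expectation_le:
  fixes f :: "'a \<Rightarrow> real"
  assumes "integrable M f" "AE x in M. c \<le> f x" "expectation f \<le> c"
  shows "AE x in M. f x = c"
proof -
  have int: "integrable M (\<lambda>x. f x - c)" and nonneg: "AE x in M. 0 \<le> f x - c"
    using assms(1,2) by (auto elim: eventually_mono)
  have "(\<integral>x. f x - c \<partial>M) = expectation f - c"
    using assms(1) by (simp add: prob_space)
  then have "(\<integral>x. f x - c \<partial>M) = 0"
    using integral_nonneg_AE[OF nonneg] assms(3) by linarith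
  then have "AE x in M. f x - c = 0"
    using integral_nonneg_eq_0_iff_AE[OF int nonneg] by simp
  then show ?thesis
    by eventually_elim simp
qed

lemma L_class_not_AE_const:
  assumes "\<sigma> > 0" "L_class \<mu> \<sigma> F"
  shows "\<not> (AE x in F. x = c)"
proof
  assume const: "AE x in F. x = c"
  note F = L_classD[OF assms(2)]
  interpret real_distribution F by (rule F(1))
  have "AE x in F. x ^ 2 = c ^ 2"
    using const by eventually_elim simp
  then have "\<mu> ^ 2 + \<sigma> ^ 2 = c ^ 2"
    using F(5) integral_cong_AE[of "\<lambda>x. x ^ 2" F "\<lambda>x. c ^ 2"] by simp
  moreover have "\<mu> = c"
    using F(4) integral_cong_AE[of "\<lambda>x. x" F "\<lambda>x. c"] const by simp
  ultimately show False
    using assms(1) by simp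
qed

lemma L_class_AE_lower_less_mean:
  assumes "\<sigma> > 0" "L_class \<mu> \<sigma> F" "AE x in F. l \<le> x"
  shows "l < \<mu>"
proof (rule ccontr)
  assume "\<not> l < \<mu>"
  note F = L_classD[OF assms(2)]
  interpret real_distribution F by (rule F(1))
  have "AE x in F. x = l"
    using \<open>\<not> l < \<mu>\<close> F by (intro AE_eq_if_AE_ge_expectation_le assms(3)) auto
  then show False
    using L_class_not_AE_const[OF assms(1,2)] by blast
qed

lemma L_class_mean_less_AE_upper:
  assumes "\<sigma> > 0" "L_class \<mu> \<sigma> F" "AE x in F. x \<le> u"
  shows "\<mu> < u"
proof (rule ccontr)
  assume "\<not> \<mu> < u"
  note F = L_classD[OF assms(2)]
  interpret real_distribution F by (rule F(1))
  have "AE x in F. - x = - u"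
    using \<open>\<not> \<mu> < u\<close> F assms(3) by (intro AE_eq_if_AE_ge_expectation_le) auto
  then show False
    using L_class_not_AE_const[OF assms(1,2), of u] by (auto elim: eventually_mono)
qed

lemma AE_ess_inf_dist_le: "AE x in M. ess_inf_dist M \<le> ereal x"
  using esssup_AE[of "\<lambda>x. - ereal x" M] unfolding ess_inf_dist_def
  by eventually_elim (simp add: ereal_uminus_le_reorder)

lemma AE_le_ess_sup_dist: "AE x in M. ereal x \<le> ess_sup_dist M"
  using esssup_AE[of "\<lambda>x. ereal x" M] unfolding ess_sup_dist_def by simp

lemma L_class_ess_inf_less_mean:
  assumes "\<sigma> > 0" "L_class \<mu> \<sigma> F"
  shows "ess_inf_dist F < ereal \<mu>"
proof -
  interpret real_distribution F by (rule L_classD(1)[OF assms(2)])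
  show ?thesis
  proof (cases "ess_inf_dist F")
    case (real l)
    then show ?thesis
      using AE_ess_inf_dist_le[of F] L_class_AE_lower_less_mean[OF assms] by simp
  next
    case PInf
    then show ?thesis
      using AE_ess_inf_dist_le[of F] AE_False by simp
  qed simp
qed

lemma L_class_mean_less_ess_sup:
  assumes "\<sigma> > 0" "L_class \<mu> \<sigma> F"
  shows "ereal \<mu> < ess_sup_dist F"
proof -
  interpret real_distribution F by (rule L_classD(1)[OF assms(2)])
  show ?thesis
  proof (cases "ess_sup_dist F")
    case (real u)
    then show ?thesis
      using AE_le_ess_sup_dist[of F] L_class_mean_less_AE_upper[OF assms] by simp
  next
    case MInf
    then show ?thesis
      using AE_le_ess_sup_dist[of F] AE_False by simp
  qed simp
qed

lemma L_class_ess_bounds_Bhatia_Davis: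
  assumes "L_class \<mu> \<sigma> F" "ess_inf_dist F = ereal l" "ess_sup_dist F = ereal u"
  shows "\<sigma> ^ 2 \<le> (u - \<mu>) * (\<mu> - l)"
  using AE_ess_inf_dist_le[of F] AE_le_ess_sup_dist[of F] assms
  by (intro L_class_Bhatia_Davis[OF assms(1)]) (auto elim: eventually_elim2)

lemma two_point_support_exists:
  fixes a b :: ereal and \<mu> \<sigma> :: real
  assumes "\<sigma> > 0" "a < ereal \<mu>" "ereal \<mu> < b"
    and bound: "\<And>l u. a = ereal l \<Longrightarrow> b = ereal u \<Longrightarrow> \<sigma> ^ 2 \<le> (u - \<mu>) * (\<mu> - l)"
  obtains x1 x2 where "x1 < \<mu>" "\<mu> < x2" "(x2 - \<mu>) * (\<mu> - x1) = \<sigma> ^ 2"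
    "a \<le> ereal x1" "ereal x2 \<le> b"
    "a \<le> ereal (\<mu> - \<sigma>) \<Longrightarrow> ereal (\<mu> + \<sigma>) \<le> b \<Longrightarrow> x2 - \<mu> = \<mu> - x1"
proof -
  consider (centered) "a \<le> ereal (\<mu> - \<sigma>)" "ereal (\<mu> + \<sigma>) \<le> b"
    | (low) "ereal (\<mu> - \<sigma>) < a" | (high) "b < ereal (\<mu> + \<sigma>)"
    by force
  then show ?thesis
  proof cases
    case centered
    then show ?thesis
      using assms(1) by (intro that[of "\<mu> - \<sigma>" "\<mu> + \<sigma>"]) (auto simp: power2_eq_square)
  next
    case low
    then obtain l where l: "a = ereal l" "l < \<mu>"
      using assms(2) by (cases a) auto
    define x2 where "x2 = \<mu> + \<sigma> ^ 2 / (\<mu> - l)"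
    have "ereal x2 \<le> b"
    proof (cases b)
      case (real u)
      then have "\<sigma> ^ 2 / (\<mu> - l) \<le> u - \<mu>"
        using bound[OF l(1) real] l(2) by (simp add: pos_divide_le_eq)
      then show ?thesis
        using real by (simp add: x2_def)
    qed (use assms(3) in auto)
    then show ?thesis
      using l low assms(1) by (intro that[of l x2]) (auto simp: x2_def)
  next
    case high
    then obtain u where u: "b = ereal u" "\<mu> < u"
      using assms(3) by (cases b) auto
    define x1 where "x1 = \<mu> - \<sigma> ^ 2 / (u - \<mu>)"
    have "a \<le> ereal x1"
    proof (cases a)
      case (real l)
      then have "\<sigma> ^ 2 / (u - \<mu>) \<le> \<mu> - l"
        using bound[OF real u(1)] u(2) by (simp add: pos_divide_le_eq mult.commute)
      then show ?thesis
        using real by (simp add: x1_def)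
    qed (use assms(2) in auto)
    then show ?thesis
      using u high assms(1) by (intro that[of x1 u]) (auto simp: x1_def)
  qed
qed

lemma symmetric_dist_reflection:
  assumes "real_distribution F" "symmetric_dist F"
  obtains c where "distr F borel (\<lambda>y. 2 * c - y) = F"
proof -
  interpret real_distribution F by (rule assms(1))
  obtain c where c: "\<And>x. measure F {y. y - c > x} = measure F {y. y - c < - x}"
    using assms(2) unfolding symmetric_dist_def by blast
  let ?R = "distr F borel (\<lambda>y. 2 * c - y)"
  have "cdf F t = cdf ?R t" for t
  proof -
    have "{y. y - c > t - c} = {t<..}" "{y. y - c < - (t - c)} = {..<2 * c - t}"
      by auto
    then have tails: "measure F {t<..} = measure F {..<2 * c - t}"
      using c[of "t - c"] by simp
    have "cdf F t = 1 - measure F {t<..}"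
      using prob_compl[of "{t<..}"] by (simp add: cdf_def Compl_eq_Diff_UNIV[symmetric])
    also have "\<dots> = 1 - measure F {..<2 * c - t}"
      by (simp add: tails)
    also have "\<dots> = measure F (UNIV - {..<2 * c - t})"
      using prob_compl[of "{..<2 * c - t}"] by simp
    also have "UNIV - {..<2 * c - t} = (\<lambda>y. 2 * c - y) -` {..t} \<inter> space F"
      by auto
    also have "measure F \<dots> = cdf ?R t"
      unfolding cdf_def by (subst measure_distr) auto
    finally show ?thesis .
  qed
  then have "F = ?R"
    by (intro cdf_unique assms(1) real_distribution_distr) auto
  then show ?thesis
    by (rule that[OF sym])
qed

lemma L_class_symmetric_reflection:
  assumes "L_class \<mu> \<sigma> F" "symmetric_dist F"
  shows "distr F borel (\<lambda>y. 2 * \<mu> - y) = F"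
proof -
  note F = L_classD[OF assms(1)]
  interpret real_distribution F by (rule F(1))
  obtain c where c: "distr F borel (\<lambda>y. 2 * c - y) = F"
    using symmetric_dist_reflection[OF F(1) assms(2)] .
  have "\<mu> = (\<integral>x. x \<partial>distr F borel (\<lambda>y. 2 * c - y))"
    using F(4) c by simp
  also have "\<dots> = (\<integral>x. 2 * c - x \<partial>F)"
    by (subst integral_distr) auto
  also have "\<dots> = 2 * c - \<mu>"
    using F by simp
  finally show ?thesis
    using c by simp
qed

lemma L_class_symmetric_AE_reflect:
  assumes "L_class \<mu> \<sigma> F" "symmetric_dist F" "AE x in F. P x" "{x. P x} \<in> sets borel"
  shows "AE x in F. P (2 * \<mu> - x)"
proof -
  interpret real_distribution F by (rule L_classD(1)[OF assms(1)])
  have "AE x in distr F borel (\<lambda>y. 2 * \<mu> - y). P x"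
    unfolding L_class_symmetric_reflection[OF assms(1,2)] by (rule assms(3))
  then show ?thesis
    using assms(4) by (subst (asm) AE_distr_iff) auto
qed

lemma L_class_symmetric_ess_inf_le:
  assumes "\<sigma> > 0" "L_class \<mu> \<sigma> F" "symmetric_dist F"
  shows "ess_inf_dist F \<le> ereal (\<mu> - \<sigma>)"
proof (cases "ess_inf_dist F")
  case (real l)
  have lower: "AE x in F. l \<le> x"
    using AE_ess_inf_dist_le[of F] real by simp
  then have "AE x in F. l \<le> 2 * \<mu> - x"
    using L_class_symmetric_AE_reflect[OF assms(2,3), of "\<lambda>x. l \<le> x"] by simp
  with lower have "AE x in F. l \<le> x \<and> x \<le> 2 * \<mu> - l"
    by eventually_elim auto
  then have "\<sigma> ^ 2 \<le> (2 * \<mu> - l - \<mu>) * (\<mu> - l)"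
    by (rule L_class_Bhatia_Davis[OF assms(2)])
  then have "\<sigma> ^ 2 \<le> (\<mu> - l) ^ 2"
    by (simp add: power2_eq_square)
  moreover have "0 \<le> \<mu> - l"
    using L_class_AE_lower_less_mean[OF assms(1,2) lower] by simp
  ultimately have "\<sigma> \<le> \<mu> - l"
    by (rule power2_le_imp_le)
  then show ?thesis
    using real by simp
qed (use L_class_ess_inf_less_mean[OF assms(1,2)] in auto)

lemma L_class_symmetric_ess_sup_ge:
  assumes "\<sigma> > 0" "L_class \<mu> \<sigma> F" "symmetric_dist F"
  shows "ereal (\<mu> + \<sigma>) \<le> ess_sup_dist F"
proof (cases "ess_sup_dist F")
  case (real u)
  have upper: "AE x in F. x \<le> u"
    using AE_le_ess_sup_dist[of F] real by simp
  then have "AE x in F. 2 * \<mu> - x \<le> u"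
    using L_class_symmetric_AE_reflect[OF assms(2,3), of "\<lambda>x. x \<le> u"] by simp
  with upper have "AE x in F. 2 * \<mu> - u \<le> x \<and> x \<le> u"
    by eventually_elim auto
  then have "\<sigma> ^ 2 \<le> (u - \<mu>) * (\<mu> - (2 * \<mu> - u))"
    by (rule L_class_Bhatia_Davis[OF assms(2)])
  then have "\<sigma> ^ 2 \<le> (u - \<mu>) ^ 2"
    by (simp add: power2_eq_square)
  moreover have "0 \<le> u - \<mu>"
    using L_class_mean_less_AE_upper[OF assms(1,2) upper] by simp
  ultimately have "\<sigma> \<le> u - \<mu>"
    by (rule power2_le_imp_le)
  then show ?thesis
    using real by simp
qed (use L_class_mean_less_ess_sup[OF assms(1,2)] in auto)

theorem lemma1:
  fixes \<mu> \<sigma> :: real and F :: "real measure"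
  assumes "\<sigma> > 0" and "L_class \<mu> \<sigma> F"
  shows "\<exists>G x1 x2. two_point_on G x1 x2 \<and> L_class \<mu> \<sigma> G \<and>
            ess_inf_dist F \<le> ereal x1 \<and> ereal x1 \<le> ess_sup_dist F \<and>
            ess_inf_dist F \<le> ereal x2 \<and> ereal x2 \<le> ess_sup_dist F \<and>
            (symmetric_dist F \<longrightarrow> symmetric_dist G)"
proof -
  obtain x1 x2 where x: "x1 < \<mu>" "\<mu> < x2" "(x2 - \<mu>) * (\<mu> - x1) = \<sigma> ^ 2"
    and support: "ess_inf_dist F \<le> ereal x1" "ereal x2 \<le> ess_sup_dist F"
    and centered: "ess_inf_dist F \<le> ereal (\<mu> - \<sigma>) \<Longrightarrow> ereal (\<mu> + \<sigma>) \<le> ess_sup_dist F \<Longrightarrow>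
                   x2 - \<mu> = \<mu> - x1"
    using two_point_support_exists[OF assms(1) L_class_ess_inf_less_mean[OF assms]
        L_class_mean_less_ess_sup[OF assms] L_class_ess_bounds_Bhatia_Davis[OF assms(2)]]
    by blast
  obtain G where G: "two_point_on G x1 x2" "L_class \<mu> \<sigma> G" "x2 - \<mu> = \<mu> - x1 \<longrightarrow> symmetric_dist G"
    using two_point_L_class_exists[OF x] by blast
  have "ereal x1 \<le> ereal x2"
    using x(1,2) by simp
  then have "ess_inf_dist F \<le> ereal x2" "ereal x1 \<le> ess_sup_dist F"
    using support order.trans by blast+
  moreover have "symmetric_dist G" if "symmetric_dist F"
    using G(3) centered[OF L_class_symmetric_ess_inf_le[OF assms that]
        L_class_symmetric_ess_sup_ge[OF assms that]] by simp
  ultimately show ?thesis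
    using G(1,2) support by (intro exI[of _ G] exI[of _ x1] exI[of _ x2]) simp
qed

end
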